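(* Let $p_s\in(0,1)$, $p_f=1-p_s$, let $K\ge1$ be an integer and let $p_0,p\in[0,1]$ with $p_0+Kp=1$. Let $(h(t))_{t\in\mathbb{N}}$ be i.i.d. with $\mathbb{P}[h(t)=1]=p_s$, $\mathbb{P}[h(t)=0]=p_f$, and let $(\delta(t))_{t\in\mathbb{N}}$ be i.i.d., independent of $(h(t))$, with $\mathbb{P}[\delta(t)=0]=p_0$ and $\mathbb{P}[\delta(t)=k]=p$ for $1\le k\le K$. Define the positive-integer-valued process $\Delta(t)$ by $$\Delta(t)=\begin{cases}\delta(t)+1, & h(t)=1,\\ \max\{1,\ \Delta(t-1)+\delta(t)-\delta(t-1)+1\}, & h(t)=0.\end{cases}$$ Then the stationary distribution $\pi_{k,i}=\lim_{t\to\infty}\mathbb{P}[\delta(t)=k,\Delta(t)=i]$, $k\in\{0,1,\dots,K\}$, $i\ge1$, of the Markov chain $(\delta(t),\Delta(t))$ is given by $$\pi_{k,i}=\begin{cases} p_0\,p_s\,p_f^{\,i-1}, & k=0,\ i\ge1,\\ p\,p_s\,p_f^{\,i-k-1}, & 1\le k\le \min\{K,i-1\},\\ 0, & \text{otherwise}.\end{cases}$$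
   Context: Model: $h(t)=1$ means successful decoding at the receiver in slot $t$; $\delta(t)$ is the (random) clock drift, in slots, of the receiver's clock relative to the transmitter's clock in slot $t$; $\Delta(t)$ is the age of information (AoI) at the receiver in slot $t$. *)

theory Defs
  imports "HOL-Probability.Probability"
begin

definition aoi_stat_dist :: "real \<Rightarrow> real \<Rightarrow> real \<Rightarrow> nat \<Rightarrow> nat \<Rightarrow> nat \<Rightarrow> real" where
  "aoi_stat_dist p0 p ps K k i =
     (if k = 0 \<and> i \<ge> 1 then p0 * ps * (1 - ps) ^ (i - 1)
      else if 1 \<le> k \<and> k \<le> min K (i - 1) then p * ps * (1 - ps) ^ (i - k - 1)
      else 0)"

end

theory Submission
  imports Defs
begin

text \<open>Once a decoding success has occurred, the recursion forgets both the clamp at 1 and the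
initial value: if \<open>m \<le> t\<close> is the last successful slot, the drift terms telescope and
\<open>\<Delta>(t) = \<delta>(t) + (t - m) + 1\<close>. Hence, off the event of no success in slots \<open>1..t\<close>, whose
probability \<open>pf^t\<close> vanishes, the event \<open>\<delta>(t) = k, \<Delta>(t) = i\<close> says exactly that \<open>\<delta>(t) = k\<close>,
slot \<open>t - (i - k - 1)\<close> is a success and all later slots up to \<open>t\<close> fail; by independence its
probability is \<open>P[\<delta>(t) = k] ps pf^(i-k-1)\<close>.\<close>

lemma aoi_since_last_success:
  fixes h \<delta> :: "nat \<Rightarrow> nat" and \<Delta> :: "nat \<Rightarrow> int"
  assumes rec: "\<And>t. \<Delta> (Suc t) = (if h (Suc t) = 1 then int (\<delta> (Suc t)) + 1
                  else max 1 (\<Delta> t + int (\<delta> (Suc t)) - int (\<delta> t) + 1))"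
    and "1 \<le> m" "m \<le> t" "h m = 1" "\<forall>s\<in>{m<..t}. h s \<noteq> 1"
  shows "\<Delta> t = int (\<delta> t) + int (t - m) + 1"
proof -
  obtain n where t: "t = m + n" using \<open>m \<le> t\<close> le_Suc_ex by blast
  have "\<Delta> (m + n) = int (\<delta> (m + n)) + int n + 1"
    using assms(5) unfolding t
  proof (induction n)
    case 0
    then show ?case using rec[of "m - 1"] \<open>1 \<le> m\<close> \<open>h m = 1\<close> by simp
  next
    case (Suc n)
    then show ?case using rec[of "m + n"] by simp
  qed
  then show ?thesis by (simp add: t)
qed

lemma ex_last_in_atLeastAtMost:
  fixes P :: "nat \<Rightarrow> bool"
  assumes "\<exists>s\<in>{a..b}. P s"
  obtains m where "m \<in> {a..b}" "P m" "\<forall>s\<in>{m<..b}. \<not> P s"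
proof
  let ?S = "{s\<in>{a..b}. P s}"
  have "finite ?S" "?S \<noteq> {}" using assms by auto
  then show "Max ?S \<in> {a..b}" "P (Max ?S)" using Max_in by blast+
  show "\<forall>s\<in>{Max ?S<..b}. \<not> P s"
  proof (intro ballI notI)
    fix s assume "s \<in> {Max ?S<..b}" "P s"
    then have "s \<in> ?S" using \<open>Max ?S \<in> {a..b}\<close> by auto
    then have "s \<le> Max ?S" using Max_ge[OF \<open>finite ?S\<close>] by blast
    with \<open>s \<in> {Max ?S<..b}\<close> show False by simp
  qed
qed

lemma aoi_eq_iff_last_success:
  fixes h \<delta> :: "nat \<Rightarrow> nat" and \<Delta> :: "nat \<Rightarrow> int"
  assumes rec: "\<And>t. \<Delta> (Suc t) = (if h (Suc t) = 1 then int (\<delta> (Suc t)) + 1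
                  else max 1 (\<Delta> t + int (\<delta> (Suc t)) - int (\<delta> t) + 1))"
    and success: "\<exists>s\<in>{1..t}. h s = 1"
  shows "\<Delta> t = j \<longleftrightarrow> (\<exists>n<t. j = int (\<delta> t) + int n + 1 \<and> h (t - n) = 1 \<and> (\<forall>s\<in>{t - n<..t}. h s \<noteq> 1))"
proof -
  obtain m where m: "m \<in> {1..t}" "h m = 1" "\<forall>s\<in>{m<..t}. h s \<noteq> 1"
    using ex_last_in_atLeastAtMost[OF success] by blast
  have \<Delta>_eq: "\<Delta> t = int (\<delta> t) + int (t - m) + 1"
    using aoi_since_last_success[where h = h and \<delta> = \<delta> and \<Delta> = \<Delta>, OF rec] m by auto
  have last_unique: "t - n = m" if "n < t" "h (t - n) = 1" "\<forall>s\<in>{t - n<..t}. h s \<noteq> 1" for n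
    using that m by (metis atLeastAtMost_iff diff_le_self greaterThanAtMost_iff linorder_neqE_nat)
  show ?thesis
  proof
    assume "\<Delta> t = j"
    then show "\<exists>n<t. j = int (\<delta> t) + int n + 1 \<and> h (t - n) = 1 \<and> (\<forall>s\<in>{t - n<..t}. h s \<noteq> 1)"
      using m \<Delta>_eq by (intro exI[of _ "t - m"]) auto
  next
    assume "\<exists>n<t. j = int (\<delta> t) + int n + 1 \<and> h (t - n) = 1 \<and> (\<forall>s\<in>{t - n<..t}. h s \<noteq> 1)"
    then obtain n where "n < t" "j = int (\<delta> t) + int n + 1" "t - n = m"
      using last_unique by blast
    then show "\<Delta> t = j" using \<Delta>_eq by auto
  qed
qed

lemma (in prob_space) prob_indep_vars_Ball:
  assumes indep: "indep_vars M' X I" and "finite J" "J \<subseteq> I" "\<And>j. j \<in> J \<Longrightarrow> S j \<in> sets (M' j)"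
  shows "prob {x\<in>space M. \<forall>j\<in>J. X j x \<in> S j} = (\<Prod>j\<in>J. prob {x\<in>space M. X j x \<in> S j})"
proof (cases "J = {}")
  case True
  then show ?thesis by (simp add: prob_space)
next
  case False
  have "{x\<in>space M. \<forall>j\<in>J. X j x \<in> S j} = (\<Inter>j\<in>J. X j -` S j \<inter> space M)"
    using False by auto
  then show ?thesis
    using indep_varsD[OF indep False assms(2-4)] by (simp add: vimage_def Int_def conj_commute)
qed

lemma (in prob_space) prob_indep_vars_Plus:
  fixes X Y :: "nat \<Rightarrow> 'a \<Rightarrow> 'b"
  assumes indep: "indep_vars (\<lambda>_. count_space UNIV) (\<lambda>j. case j of Inl t \<Rightarrow> X t | Inr t \<Rightarrow> Y t) UNIV"
    and "finite S" "finite T"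
  shows "prob {x\<in>space M. (\<forall>s\<in>S. X s x \<in> A s) \<and> (\<forall>t\<in>T. Y t x \<in> B t)}
    = (\<Prod>s\<in>S. prob {x\<in>space M. X s x \<in> A s}) * (\<Prod>t\<in>T. prob {x\<in>space M. Y t x \<in> B t})"
proof -
  define Z where "Z = (\<lambda>j. case j of Inl t \<Rightarrow> X t | Inr t \<Rightarrow> Y t)"
  define C where "C = (\<lambda>j. case j of Inl t \<Rightarrow> A t | Inr t \<Rightarrow> B t)"
  have "{x\<in>space M. (\<forall>s\<in>S. X s x \<in> A s) \<and> (\<forall>t\<in>T. Y t x \<in> B t)}
      = {x\<in>space M. \<forall>j\<in>Inl ` S \<union> Inr ` T. Z j x \<in> C j}"
    by (simp add: Z_def C_def ball_Un)
  also have "prob \<dots> = (\<Prod>j\<in>Inl ` S \<union> Inr ` T. prob {x\<in>space M. Z j x \<in> C j})"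
    using indep assms(2,3) unfolding Z_def by (intro prob_indep_vars_Ball) auto
  also have "\<dots> = (\<Prod>j\<in>Inl ` S. prob {x\<in>space M. Z j x \<in> C j}) * (\<Prod>j\<in>Inr ` T. prob {x\<in>space M. Z j x \<in> C j})"
    using assms(2,3) by (intro prod.union_disjoint) auto
  also have "\<dots> = (\<Prod>s\<in>S. prob {x\<in>space M. X s x \<in> A s}) * (\<Prod>t\<in>T. prob {x\<in>space M. Y t x \<in> B t})"
    by (simp add: prod.reindex Z_def C_def)
  finally show ?thesis .
qed

lemma (in prob_space) tendsto_prob_up_to_vanishing:
  assumes "\<And>t. A t \<in> events" "\<And>t. N t \<in> events"
    and "(\<lambda>t. prob (N t)) \<longlonglongrightarrow> 0" "(\<lambda>t. prob (A t - N t)) \<longlonglongrightarrow> c"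
  shows "(\<lambda>t. prob (A t)) \<longlonglongrightarrow> c"
proof -
  have "(\<lambda>t. prob (A t \<inter> N t)) \<longlonglongrightarrow> 0"
  proof (rule tendsto_sandwich[OF _ _ tendsto_const assms(3)])
    show "\<forall>\<^sub>F t in sequentially. 0 \<le> prob (A t \<inter> N t)" by simp
    show "\<forall>\<^sub>F t in sequentially. prob (A t \<inter> N t) \<le> prob (N t)"
      using assms(2) by (intro always_eventually allI finite_measure_mono) auto
  qed
  moreover have "prob (A t) = prob (A t - N t) + prob (A t \<inter> N t)" for t
    using assms(1,2) by (subst finite_measure_Diff') (auto simp: Int_absorb1 finite_measure_Diff)
  ultimately show ?thesis
    using tendsto_add[OF assms(4)] by fastforce
qed

locale aoi_process = prob_space M for M :: "'a measure" +
  fixes h \<delta> :: "nat \<Rightarrow> 'a \<Rightarrow> nat" and \<Delta> :: "nat \<Rightarrow> 'a \<Rightarrow> int" and ps :: real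
  assumes indep: "indep_vars (\<lambda>_. count_space UNIV)
                  (\<lambda>j. case j of Inl t \<Rightarrow> h t | Inr t \<Rightarrow> \<delta> t) (UNIV :: (nat + nat) set)"
    and prob_success: "\<And>t. prob {x\<in>space M. h t x = 1} = ps"
    and prob_success_pos: "0 < ps"
    and init_meas: "\<Delta> 0 \<in> measurable M (count_space UNIV)"
    and rec: "\<And>t x. x \<in> space M \<Longrightarrow>
               \<Delta> (Suc t) x = (if h (Suc t) x = 1 then int (\<delta> (Suc t) x) + 1
                  else max 1 (\<Delta> t x + int (\<delta> (Suc t) x) - int (\<delta> t x) + 1))"
begin

lemma random_variable_indep_family:
  "random_variable (count_space UNIV) (case j of Inl t \<Rightarrow> h t | Inr t \<Rightarrow> \<delta> t)"
  using indep unfolding indep_vars_def2 by blast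

lemma measurable_success [measurable]: "h t \<in> M \<rightarrow>\<^sub>M count_space UNIV"
  using random_variable_indep_family[of "Inl t"] by simp

lemma measurable_drift [measurable]: "\<delta> t \<in> M \<rightarrow>\<^sub>M count_space UNIV"
  using random_variable_indep_family[of "Inr t"] by simp

lemma measurable_aoi [measurable]: "\<Delta> t \<in> M \<rightarrow>\<^sub>M count_space UNIV"
proof (induction t)
  case 0
  show ?case by (fact init_meas)
next
  case (Suc t)
  note Suc [measurable]
  show ?case by (subst measurable_cong[OF rec]) measurable
qed

lemma prob_failure: "prob {x\<in>space M. h t x \<noteq> 1} = 1 - ps"
proof -
  have "{x\<in>space M. h t x \<noteq> 1} = space M - {x\<in>space M. h t x = 1}" by auto
  then show ?thesis using prob_compl[of "{x\<in>space M. h t x = 1}"] prob_success by simp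
qed

definition no_success :: "nat \<Rightarrow> 'a set" where
  "no_success t = {x\<in>space M. \<forall>s\<in>{1..t}. h s x \<noteq> 1}"

lemma no_success_in_events [measurable]: "no_success t \<in> events"
  unfolding no_success_def by measurable

lemma prob_no_success: "prob (no_success t) = (1 - ps) ^ t"
proof -
  have "prob (no_success t) = (\<Prod>s\<in>{1..t}. prob {x\<in>space M. h s x \<noteq> 1})"
    using prob_indep_vars_Plus[OF indep, of "{1..t}" "{}" "\<lambda>_. - {1}"] by (simp add: no_success_def)
  then show ?thesis unfolding prob_failure by simp
qed

lemma tendsto_prob_no_success: "(\<lambda>t. prob (no_success t)) \<longlonglongrightarrow> 0"
proof -
  have "ps \<le> 1" using prob_success[of 0] by (metis prob_le_1)
  then show ?thesis
    unfolding prob_no_success using prob_success_pos by (intro LIMSEQ_power_zero) auto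
qed

lemma prob_last_success:
  "prob {x\<in>space M. \<delta> t x = k \<and> h m x = 1 \<and> (\<forall>s\<in>{m<..t}. h s x \<noteq> 1)}
    = prob {x\<in>space M. \<delta> t x = k} * ps * (1 - ps) ^ (t - m)"
proof -
  define A where "A s = (if s = m then {1} else - {1 :: nat})" for s
  have "{x\<in>space M. \<delta> t x = k \<and> h m x = 1 \<and> (\<forall>s\<in>{m<..t}. h s x \<noteq> 1)}
      = {x\<in>space M. (\<forall>s\<in>insert m {m<..t}. h s x \<in> A s) \<and> (\<forall>t'\<in>{t}. \<delta> t' x \<in> {k})}"
    by (auto simp: A_def)
  also have "prob \<dots> = (\<Prod>s\<in>insert m {m<..t}. prob {x\<in>space M. h s x \<in> A s}) * prob {x\<in>space M. \<delta> t x = k}"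
    using prob_indep_vars_Plus[OF indep, of "insert m {m<..t}" "{t}" A "\<lambda>_. {k}"] by simp
  also have "(\<Prod>s\<in>insert m {m<..t}. prob {x\<in>space M. h s x \<in> A s})
      = prob {x\<in>space M. h m x = 1} * (\<Prod>s\<in>{m<..t}. prob {x\<in>space M. h s x \<noteq> 1})"
    by (simp add: A_def)
  finally show ?thesis unfolding prob_success prob_failure by (simp add: mult_ac)
qed

lemma drift_aoi_minus_no_success:
  fixes k i t :: nat
  defines "n \<equiv> i - k - 1"
  shows "{x\<in>space M. \<delta> t x = k \<and> \<Delta> t x = int i} - no_success t
    = (if k < i \<and> n < t
       then {x\<in>space M. \<delta> t x = k \<and> h (t - n) x = 1 \<and> (\<forall>s\<in>{t - n<..t}. h s x \<noteq> 1)}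
       else {})"
proof -
  have aoi_iff: "\<Delta> t x = int i \<longleftrightarrow> k < i \<and> n < t \<and> h (t - n) x = 1 \<and> (\<forall>s\<in>{t - n<..t}. h s x \<noteq> 1)"
    if x: "x \<in> space M" "x \<notin> no_success t" and "\<delta> t x = k" for x
  proof -
    have "\<Delta> t x = int i \<longleftrightarrow> (\<exists>n'<t. int i = int (\<delta> t x) + int n' + 1
        \<and> h (t - n') x = 1 \<and> (\<forall>s\<in>{t - n'<..t}. h s x \<noteq> 1))"
      using x by (intro aoi_eq_iff_last_success) (auto simp: rec no_success_def)
    also have "\<dots> \<longleftrightarrow> (\<exists>n'<t. (k < i \<and> n' = n) \<and> h (t - n') x = 1 \<and> (\<forall>s\<in>{t - n'<..t}. h s x \<noteq> 1))"
    proof -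
      have "int i = int k + int n' + 1 \<longleftrightarrow> k < i \<and> n' = n" for n'
        unfolding n_def by linarith
      then show ?thesis using \<open>\<delta> t x = k\<close> by simp
    qed
    finally show ?thesis by blast
  qed
  have "\<delta> t x = k \<and> \<Delta> t x = int i \<and> x \<notin> no_success t \<longleftrightarrow>
      k < i \<and> n < t \<and> \<delta> t x = k \<and> h (t - n) x = 1 \<and> (\<forall>s\<in>{t - n<..t}. h s x \<noteq> 1)"
    if x: "x \<in> space M" for x
  proof (cases "x \<in> no_success t")
    case True
    have "t - n \<in> {1..t}" if "n < t" using that by auto
    with True show ?thesis unfolding no_success_def by blast
  next
    case False
    then show ?thesis using aoi_iff[OF x] by blast
  qed
  then show ?thesis by auto
qed

lemma tendsto_prob_drift_aoi:
  assumes prob_drift: "\<And>t. prob {x\<in>space M. \<delta> t x = k} = q"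
  shows "(\<lambda>t. prob {x\<in>space M. \<delta> t x = k \<and> \<Delta> t x = int i})
    \<longlonglongrightarrow> (if k < i then q * ps * (1 - ps) ^ (i - k - 1) else 0)"
proof (rule tendsto_prob_up_to_vanishing[rotated 2, OF tendsto_prob_no_success])
  let ?n = "i - k - 1"
  have "prob ({x\<in>space M. \<delta> t x = k \<and> \<Delta> t x = int i} - no_success t)
      = (if k < i then q * ps * (1 - ps) ^ ?n else 0)" if "?n < t" for t
    using that unfolding drift_aoi_minus_no_success if_distrib[of prob] prob_last_success prob_drift
    by simp
  then show "(\<lambda>t. prob ({x\<in>space M. \<delta> t x = k \<and> \<Delta> t x = int i} - no_success t))
      \<longlonglongrightarrow> (if k < i then q * ps * (1 - ps) ^ ?n else 0)"
    by (intro tendsto_eventually) (auto simp: eventually_sequentially intro: exI[of _ "Suc ?n"])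
qed measurable

end

theorem lemma2:
  fixes M :: "'a measure"
    and ps pf p0 p :: real and K :: nat
    and h \<delta> :: "nat \<Rightarrow> 'a \<Rightarrow> nat"
    and \<Delta> :: "nat \<Rightarrow> 'a \<Rightarrow> int"
  assumes "prob_space M"
    and "0 < ps" "ps < 1" "pf = 1 - ps"
    and "K \<ge> 1"
    and "0 \<le> p0" "p0 \<le> 1" "0 \<le> p" "p \<le> 1" "p0 + real K * p = 1"
    and indep: "prob_space.indep_vars M (\<lambda>_. count_space UNIV)
                  (\<lambda>j. case j of Inl t \<Rightarrow> h t | Inr t \<Rightarrow> \<delta> t) (UNIV :: (nat + nat) set)"
    and h1: "\<And>t. measure M {x \<in> space M. h t x = 1} = ps"
    and h0: "\<And>t. measure M {x \<in> space M. h t x = 0} = pf"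
    and d0: "\<And>t. measure M {x \<in> space M. \<delta> t x = 0} = p0"
    and dk: "\<And>t k. 1 \<le> k \<Longrightarrow> k \<le> K \<Longrightarrow> measure M {x \<in> space M. \<delta> t x = k} = p"
    and init_meas: "\<Delta> 0 \<in> measurable M (count_space UNIV)"
    and init_pos: "\<And>x. x \<in> space M \<Longrightarrow> \<Delta> 0 x \<ge> 1"
    and rec: "\<And>t x. x \<in> space M \<Longrightarrow>
               \<Delta> (Suc t) x = (if h (Suc t) x = 1 then int (\<delta> (Suc t) x) + 1
                  else max 1 (\<Delta> t x + int (\<delta> (Suc t) x) - int (\<delta> t x) + 1))"
  shows "\<forall>k \<le> K. \<forall>i \<ge> 1.
           (\<lambda>t. measure M {x \<in> space M. \<delta> t x = k \<and> \<Delta> t x = int i})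
             \<longlonglongrightarrow> aoi_stat_dist p0 p ps K k i"
proof -
  interpret aoi_process M h \<delta> \<Delta> ps
    using assms(1,2) indep h1 init_meas rec by (simp add: aoi_process_def aoi_process_axioms_def)
  show ?thesis
  proof (intro allI impI)
    fix k i :: nat
    assume "k \<le> K" "1 \<le> i"
    have "prob {x\<in>space M. \<delta> t x = k} = (if k = 0 then p0 else p)" for t
      using d0 dk \<open>k \<le> K\<close> by simp
    then have "(\<lambda>t. prob {x\<in>space M. \<delta> t x = k \<and> \<Delta> t x = int i})
        \<longlonglongrightarrow> (if k < i then (if k = 0 then p0 else p) * ps * (1 - ps) ^ (i - k - 1) else 0)"
      by (rule tendsto_prob_drift_aoi)
    moreover have "aoi_stat_dist p0 p ps K k i
        = (if k < i then (if k = 0 then p0 else p) * ps * (1 - ps) ^ (i - k - 1) else 0)"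
      using \<open>k \<le> K\<close> \<open>1 \<le> i\<close> unfolding aoi_stat_dist_def by auto
    ultimately show "(\<lambda>t. prob {x\<in>space M. \<delta> t x = k \<and> \<Delta> t x = int i}) \<longlonglongrightarrow> aoi_stat_dist p0 p ps K k i"
      by simp
  qed
qed

end
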